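(* Let $G=(V,E,c_V^G,c_E^G)$ and $H=(V,E,c_V^H,c_E^H)$ be two capacitated graphs on the same graph $(V,E)$ that differ only in the capacity of one edge $(s,t)\in E$ (all vertex capacities and all other edge capacities coincide). Assume that in the executions of Rising-Tide on $G$ and on $H$ no two vertices become saturated simultaneously, and that the dependency graphs coincide, $D_G=D_H$. Let $\mu_G,\mu_H$ be the outputs of Rising-Tide on $G$ and $H$. Then \[\sum_i\left|\Big(c_V^G(i)-\sum_j\mu_G(i,j)\Big)-\Big(c_V^H(i)-\sum_j\mu_H(i,j)\Big)\right|\le 2|c_E^G(s,t)-c_E^H(s,t)|.\]
   Context: Capacitated graphs have nonnegative vertex capacities $c_V$ and edge capacities $c_E$; edges may include self-loops, and in $\sum_j\mu(i,j)$ a self-loop at $i$ counts once. A feasible fractional matching $\mu:E\to\mathbb{R}_{\ge0}$ satisfies $\mu(e)\le c_E(e)$ and $\sum_j\mu(i,j)\le c_V(i)$. Vertex $i$ is saturated if $\sum_j\mu(i,j)=c_V(i)$; edge $e$ is saturated if $\mu(e)=c_E(e)$. Rising-Tide: set $E'=\{e\in E:c_E(e)>0\}$ and $\mu\equiv0$; while $E'\ne\emptyset$: choose the maximum $\delta\ge0$ such that $\mu+\delta\mathbf{1}_{E'}$ is feasible, set $\mu\gets\mu+\delta\mathbf{1}_{E'}$, and remove from $E'$ every edge $(i,j)$ such that $i$, $j$, or $(i,j)$ is saturated; return $\mu$. Dependency graph $D_G$: the directed graph on $V$ which, for each edge $(i,j)\in E$, contains $j\to i$ if $i$ is saturated at the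 moment $(i,j)$ is removed from $E'$ in the execution on $G$, and contains $i\to j$ if $j$ is saturated at that moment. *)

theory Defs
  imports Complex_Main
begin

text \<open>A capacitated graph is given by a finite vertex set V, an edge set E whose
elements are sets of one (self-loop) or two vertices, vertex capacities cV and
edge capacities cE.\<close>

definition cgraph :: "'v set \<Rightarrow> 'v set set \<Rightarrow> bool" where
  "cgraph V E \<longleftrightarrow> finite V \<and> (\<forall>e\<in>E. e \<subseteq> V \<and> (card e = 1 \<or> card e = 2))"

text \<open>load of vertex i: sum over j of mu(i,j), a self-loop counted once\<close>
definition vload :: "'v set set \<Rightarrow> ('v set \<Rightarrow> real) \<Rightarrow> 'v \<Rightarrow> real" where
  "vload E mu i = (\<Sum>e\<in>{e\<in>E. i \<in> e}. mu e)"

definition feasible ::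
  "'v set \<Rightarrow> 'v set set \<Rightarrow> ('v \<Rightarrow> real) \<Rightarrow> ('v set \<Rightarrow> real) \<Rightarrow> ('v set \<Rightarrow> real) \<Rightarrow> bool" where
  "feasible V E cV cE mu \<longleftrightarrow>
     (\<forall>e\<in>E. 0 \<le> mu e \<and> mu e \<le> cE e) \<and> (\<forall>i\<in>V. vload E mu i \<le> cV i)"

definition vsat :: "'v set set \<Rightarrow> ('v \<Rightarrow> real) \<Rightarrow> ('v set \<Rightarrow> real) \<Rightarrow> 'v \<Rightarrow> bool" where
  "vsat E cV mu i \<longleftrightarrow> vload E mu i = cV i"

definition esat :: "('v set \<Rightarrow> real) \<Rightarrow> ('v set \<Rightarrow> real) \<Rightarrow> 'v set \<Rightarrow> bool" where
  "esat cE mu e \<longleftrightarrow> mu e = cE e"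

definition raise :: "'v set set \<Rightarrow> real \<Rightarrow> ('v set \<Rightarrow> real) \<Rightarrow> ('v set \<Rightarrow> real)" where
  "raise E' d mu = (\<lambda>e. mu e + (if e \<in> E' then d else 0))"

text \<open>the maximum delta >= 0 keeping mu + delta 1_{E'} feasible (the feasible set of
deltas is a closed bounded interval whenever E' is a nonempty set of edges)\<close>
definition rt_delta ::
  "'v set \<Rightarrow> 'v set set \<Rightarrow> ('v \<Rightarrow> real) \<Rightarrow> ('v set \<Rightarrow> real) \<Rightarrow> ('v set \<Rightarrow> real) \<Rightarrow> 'v set set \<Rightarrow> real" where
  "rt_delta V E cV cE mu E' = Sup {d. 0 \<le> d \<and> feasible V E cV cE (raise E' d mu)}"

definition rt_step ::
  "'v set \<Rightarrow> 'v set set \<Rightarrow> ('v \<Rightarrow> real) \<Rightarrow> ('v set \<Rightarrow> real)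
   \<Rightarrow> ('v set \<Rightarrow> real) \<times> 'v set set \<Rightarrow> ('v set \<Rightarrow> real) \<times> 'v set set" where
  "rt_step V E cV cE st =
     (let mu = fst st; E' = snd st;
          mu' = raise E' (rt_delta V E cV cE mu E') mu
      in (mu', {e\<in>E'. \<not> (\<exists>i\<in>e. vsat E cV mu' i) \<and> \<not> esat cE mu' e}))"

fun rt_state ::
  "'v set \<Rightarrow> 'v set set \<Rightarrow> ('v \<Rightarrow> real) \<Rightarrow> ('v set \<Rightarrow> real) \<Rightarrow> nat
   \<Rightarrow> ('v set \<Rightarrow> real) \<times> 'v set set" where
  "rt_state V E cV cE 0 = ((\<lambda>_. 0), {e\<in>E. cE e > 0})"
| "rt_state V E cV cE (Suc k) =
     (if snd (rt_state V E cV cE k) = {} then rt_state V E cV cE k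
      else rt_step V E cV cE (rt_state V E cV cE k))"

definition rising_tide ::
  "'v set \<Rightarrow> 'v set set \<Rightarrow> ('v \<Rightarrow> real) \<Rightarrow> ('v set \<Rightarrow> real) \<Rightarrow> ('v set \<Rightarrow> real)" where
  "rising_tide V E cV cE =
     fst (rt_state V E cV cE (LEAST k. snd (rt_state V E cV cE k) = {}))"

text \<open>Dependency graph: arc (j,i) (i.e. j -> i) for an edge {i,j} removed from E'
in round k such that i is saturated at that moment.\<close>
definition dep_graph ::
  "'v set \<Rightarrow> 'v set set \<Rightarrow> ('v \<Rightarrow> real) \<Rightarrow> ('v set \<Rightarrow> real) \<Rightarrow> ('v \<times> 'v) set" where
  "dep_graph V E cV cE =
     {(j, i). \<exists>k. {i, j} \<in> E \<and> {i, j} \<in> snd (rt_state V E cV cE k)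
        \<and> {i, j} \<notin> snd (rt_state V E cV cE (Suc k))
        \<and> vsat E cV (fst (rt_state V E cV cE (Suc k))) i}"

definition no_simult_sat ::
  "'v set \<Rightarrow> 'v set set \<Rightarrow> ('v \<Rightarrow> real) \<Rightarrow> ('v set \<Rightarrow> real) \<Rightarrow> bool" where
  "no_simult_sat V E cV cE \<longleftrightarrow>
     card {i\<in>V. vsat E cV (fst (rt_state V E cV cE 0)) i} \<le> 1 \<and>
     (\<forall>k. card {i\<in>V. vsat E cV (fst (rt_state V E cV cE (Suc k))) i
                    \<and> \<not> vsat E cV (fst (rt_state V E cV cE k)) i} \<le> 1)"

end

theory Submission
  imports Defs
begin

(* Put x = mu_H - mu_G.  Say that i owns e if e = {i, j} with j -> i in the dependency graph,
   i.e. e was frozen in the round in which i became saturated; as D_G = D_H, ownership is the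
   same in both runs.  An owner ends saturated in both runs, so the residual difference at i,
   the sum of x over the edges at i, vanishes; the edges owned by i are frozen in one round at a
   common level, so x is constant on them; an unowned edge ends saturated, so x vanishes on it
   except on {s, t}.  Thus at each vertex the owned edges are balanced by the others, and
   charging each vertex to its non-owned incident edges (an edge has at most two ends, one of
   them an owner unless the edge is unowned) gives the bound 2 |x {s, t}|. *)

lemma cSup_affine_le:
  fixes S :: "real set"
  assumes "S \<noteq> {}" "bdd_above S" "0 \<le> c" "\<forall>d\<in>S. a + c * d \<le> b"
  shows "a + c * Sup S \<le> b"
proof (cases "c = 0")
  case True
  then show ?thesis using assms(1,4) by auto
next
  case False
  then have "\<forall>d\<in>S. d \<le> (b - a) / c"
    using assms(3,4) by (auto simp: pos_le_divide_eq algebra_simps)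
  then have "Sup S \<le> (b - a) / c" using assms(1) by (intro cSup_least) auto
  then show ?thesis using False assms(3) by (simp add: pos_le_divide_eq mult.commute)
qed

lemma eventually_at_right_affine_less:
  fixes a b c :: real
  assumes "a < b"
  shows "\<forall>\<^sub>F \<eta> in at_right 0. a + \<eta> * c < b"
proof (rule order_tendstoD(2)[OF _ assms])
  show "((\<lambda>\<eta>. a + \<eta> * c) \<longlongrightarrow> a) (at_right 0)"
    by (auto intro!: tendsto_eq_intros)
qed

lemma cgraph_finite_edges: "cgraph V E \<Longrightarrow> finite E"
  unfolding cgraph_def by (meson Pow_iff finite_Pow_iff finite_subset subsetI)

lemma cgraph_edge_pair:
  assumes "cgraph V E" "e \<in> E" "i \<in> e"
  obtains j where "e = {i, j}"
proof -
  have "card e = 1 \<or> card e = 2" using assms(1,2) unfolding cgraph_def by blast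
  then show thesis
    using assms(3) that by (auto simp: card_1_singleton_iff card_2_iff insert_commute)
qed

lemma raise_0 [simp]: "raise A 0 M = M"
  by (simp add: raise_def)

lemma raise_raise [simp]: "raise A \<eta> (raise A d M) = raise A (d + \<eta>) M"
  by (auto simp: raise_def)

lemma vload_raise:
  assumes "finite E" "A \<subseteq> E"
  shows "vload E (raise A d M) i = vload E M i + d * real (card {e\<in>A. i \<in> e})"
proof -
  have "vload E (raise A d M) i = vload E M i + (\<Sum>e\<in>{e\<in>E. i \<in> e}. if e \<in> A then d else 0)"
    unfolding vload_def raise_def by (simp add: sum.distrib)
  also have "(\<Sum>e\<in>{e\<in>E. i \<in> e}. if e \<in> A then d else 0) = (\<Sum>e\<in>{e\<in>E. i \<in> e} \<inter> A. d)"
    using assms sum.inter_restrict[of "{e\<in>E. i \<in> e}" "\<lambda>_. d" A] by simp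
  also have "{e\<in>E. i \<in> e} \<inter> A = {e\<in>A. i \<in> e}" using assms(2) by auto
  finally show ?thesis by simp
qed

lemma feasible_raise_iff:
  assumes "finite E" "A \<subseteq> E"
  shows "feasible V E cV cE (raise A d M) \<longleftrightarrow>
    (\<forall>e\<in>E. 0 \<le> M e + (if e \<in> A then d else 0) \<and> M e + (if e \<in> A then d else 0) \<le> cE e) \<and>
    (\<forall>i\<in>V. vload E M i + d * real (card {e\<in>A. i \<in> e}) \<le> cV i)"
  unfolding feasible_def using vload_raise[OF assms] by (simp add: raise_def)

lemma bdd_above_feasible_raise:
  assumes "A \<subseteq> E" "A \<noteq> {}"
  shows "bdd_above {d. feasible V E cV cE (raise A d M)}"
proof -
  obtain e where "e \<in> A" using assms(2) by blast
  then show ?thesis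
    using assms(1) by (intro bdd_aboveI[of _ "cE e - M e"]) (force simp: feasible_def raise_def)
qed

lemma rt_delta_feasible:
  assumes "cgraph V E" "feasible V E cV cE M" "A \<subseteq> E" "A \<noteq> {}"
  shows "0 \<le> rt_delta V E cV cE M A" "feasible V E cV cE (raise A (rt_delta V E cV cE M A) M)"
proof -
  define D where "D = {d. 0 \<le> d \<and> feasible V E cV cE (raise A d M)}"
  have fE: "finite E" using assms(1) by (rule cgraph_finite_edges)
  have D_iff: "d \<in> D \<longleftrightarrow> 0 \<le> d \<and>
      (\<forall>e\<in>E. 0 \<le> M e + (if e \<in> A then d else 0) \<and> M e + (if e \<in> A then d else 0) \<le> cE e) \<and>
      (\<forall>i\<in>V. vload E M i + d * real (card {e\<in>A. i \<in> e}) \<le> cV i)" for d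
    unfolding D_def using feasible_raise_iff[OF fE assms(3)] by simp
  have M_feasible: "\<forall>e\<in>E. 0 \<le> M e \<and> M e \<le> cE e" "\<forall>i\<in>V. vload E M i \<le> cV i"
    using assms(2) unfolding feasible_def by auto
  have "0 \<in> D" unfolding D_def using assms(2) by simp
  then have D_ne: "D \<noteq> {}" by blast
  have "bdd_above D"
    using bdd_above_feasible_raise[OF assms(3,4)] unfolding D_def by (rule bdd_above_mono) blast
  have "0 \<le> Sup D" using cSup_upper[OF \<open>0 \<in> D\<close> \<open>bdd_above D\<close>] .
  moreover have "M e + (if e \<in> A then Sup D else 0) \<le> cE e" if "e \<in> E" for e
  proof -
    have "\<forall>d\<in>D. M e + 1 * (if e \<in> A then d else 0) \<le> cE e"
      using that by (auto simp: D_iff)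
    then show ?thesis
      using cSup_affine_le[OF D_ne \<open>bdd_above D\<close>, of 1 "M e" "cE e"] M_feasible that
      by (cases "e \<in> A") auto
  qed
  moreover have "vload E M i + Sup D * real (card {e\<in>A. i \<in> e}) \<le> cV i" if "i \<in> V" for i
    using cSup_affine_le[OF D_ne \<open>bdd_above D\<close>, of "real (card {e\<in>A. i \<in> e})" "vload E M i" "cV i"]
      that
    by (auto simp: D_iff mult.commute)
  ultimately have "Sup D \<in> D" using M_feasible by (auto simp: D_iff)
  then show "0 \<le> rt_delta V E cV cE M A" "feasible V E cV cE (raise A (rt_delta V E cV cE M A) M)"
    unfolding rt_delta_def D_def[symmetric] by (simp_all add: D_def)
qed

lemma feasible_raise_eventually:
  assumes "cgraph V E" "feasible V E cV cE M" "A \<subseteq> E"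
    and slack: "\<forall>e\<in>A. \<not> esat cE M e \<and> (\<forall>i\<in>e. \<not> vsat E cV M i)"
  shows "\<forall>\<^sub>F \<eta> in at_right 0. feasible V E cV cE (raise A \<eta> M)"
proof -
  have fE: "finite E" and fV: "finite V"
    using assms(1) cgraph_finite_edges unfolding cgraph_def by auto
  have M_feasible: "\<forall>e\<in>E. 0 \<le> M e \<and> M e \<le> cE e" "\<forall>i\<in>V. vload E M i \<le> cV i"
    using assms(2) unfolding feasible_def by auto
  have edges: "\<forall>\<^sub>F \<eta> in at_right 0. 0 \<le> raise A \<eta> M e \<and> raise A \<eta> M e \<le> cE e"
    if "e \<in> E" for e
  proof (cases "e \<in> A")
    case True
    then have "M e < cE e" using slack M_feasible that unfolding esat_def by force
    from eventually_at_right_affine_less[OF this, of 1] eventually_at_right_less[of 0]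
    show ?thesis by eventually_elim (use M_feasible that True in \<open>auto simp: raise_def\<close>)
  qed (use M_feasible that in \<open>simp add: raise_def\<close>)
  have vertices: "\<forall>\<^sub>F \<eta> in at_right 0. vload E (raise A \<eta> M) i \<le> cV i" if "i \<in> V" for i
  proof (cases "{e\<in>A. i \<in> e} = {}")
    case True
    then show ?thesis using M_feasible that by (simp add: vload_raise[OF fE assms(3)] True)
  next
    case False
    then have "vload E M i < cV i" using slack M_feasible that unfolding vsat_def by force
    from eventually_at_right_affine_less[OF this, of "real (card {e\<in>A. i \<in> e})"] show ?thesis
      by eventually_elim (simp add: vload_raise[OF fE assms(3)])
  qed
  show ?thesis
    using edges vertices
    unfolding feasible_def eventually_conj_iff eventually_ball_finite_distrib[OF fE]
      eventually_ball_finite_distrib[OF fV]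
    by simp
qed

lemma rt_delta_saturates:
  assumes "cgraph V E" "feasible V E cV cE M" "A \<subseteq> E" "A \<noteq> {}"
  defines "M' \<equiv> raise A (rt_delta V E cV cE M A) M"
  shows "\<exists>e\<in>A. (\<exists>i\<in>e. vsat E cV M' i) \<or> esat cE M' e"
proof (rule ccontr)
  assume "\<not> ?thesis"
  then have "\<forall>e\<in>A. \<not> esat cE M' e \<and> (\<forall>i\<in>e. \<not> vsat E cV M' i)" by blast
  with rt_delta_feasible(2)[OF assms(1-4)]
  have "\<forall>\<^sub>F \<eta> in at_right 0. 0 < \<eta> \<and> feasible V E cV cE (raise A \<eta> M')"
    unfolding M'_def
    by (intro eventually_conj eventually_at_right_less feasible_raise_eventually[OF assms(1) _ assms(3)])
  then obtain \<eta> :: real where "0 < \<eta>" "feasible V E cV cE (raise A \<eta> M')"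
    using eventually_happens'[OF trivial_limit_at_right_real] by blast
  then have "rt_delta V E cV cE M A + \<eta> \<in> {d. 0 \<le> d \<and> feasible V E cV cE (raise A d M)}"
    using rt_delta_feasible(1)[OF assms(1-4)] unfolding M'_def by simp
  moreover have "bdd_above {d. 0 \<le> d \<and> feasible V E cV cE (raise A d M)}"
    using bdd_above_feasible_raise[OF assms(3,4)] by (rule bdd_above_mono) blast
  ultimately have "rt_delta V E cV cE M A + \<eta> \<le> rt_delta V E cV cE M A"
    unfolding rt_delta_def by (rule cSup_upper)
  then show False using \<open>0 < \<eta>\<close> by simp
qed

definition owns :: "('v \<times> 'v) set \<Rightarrow> 'v \<Rightarrow> 'v set \<Rightarrow> bool" where
  "owns D i e \<longleftrightarrow> (\<exists>j. e = {i, j} \<and> (j, i) \<in> D)"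

locale capacitated_graph =
  fixes V :: "'v set" and E :: "'v set set" and cV :: "'v \<Rightarrow> real" and cE :: "'v set \<Rightarrow> real"
  assumes cgraph: "cgraph V E"
    and cV_nonneg: "\<forall>i\<in>V. 0 \<le> cV i" and cE_nonneg: "\<forall>e\<in>E. 0 \<le> cE e"
begin

abbreviation "state k \<equiv> rt_state V E cV cE k"
abbreviation "mu k \<equiv> fst (state k)"
abbreviation "active k \<equiv> snd (state k)"

lemma finite_E: "finite E"
  using cgraph by (rule cgraph_finite_edges)

lemma state_Suc_idle: "active k = {} \<Longrightarrow> state (Suc k) = state k"
  by simp

lemma
  assumes "active k \<noteq> {}"
  shows mu_Suc: "mu (Suc k) = raise (active k) (rt_delta V E cV cE (mu k) (active k)) (mu k)"
    and active_Suc: "active (Suc k) =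
      {e\<in>active k. \<not> (\<exists>i\<in>e. vsat E cV (mu (Suc k)) i) \<and> \<not> esat cE (mu (Suc k)) e}"
  using assms by (simp_all add: rt_step_def Let_def)

declare rt_state.simps(2) [simp del]

lemma active_Suc_subset: "active (Suc k) \<subseteq> active k"
  by (cases "active k = {}") (auto simp: state_Suc_idle active_Suc)

lemma active_antimono: "k \<le> m \<Longrightarrow> active m \<subseteq> active k"
  by (induction m rule: dec_induct) (use active_Suc_subset in blast)+

lemma active_subset_E: "active k \<subseteq> E"
  using active_antimono[of 0 k] by auto

lemma mu_Suc_inactive: "e \<notin> active k \<Longrightarrow> mu (Suc k) e = mu k e"
  by (cases "active k = {}") (auto simp: state_Suc_idle mu_Suc raise_def)

lemma mu_inactive:
  assumes "e \<notin> active k" "k \<le> m"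
  shows "mu m e = mu k e"
  using assms(2)
proof (induction m rule: dec_induct)
  case (step n)
  then have "e \<notin> active n" using assms(1) active_antimono[of k n] by blast
  then show ?case using step.IH mu_Suc_inactive by simp
qed simp

lemma feasible_mu: "feasible V E cV cE (mu k)"
proof (induction k)
  case 0
  then show ?case using cV_nonneg cE_nonneg by (simp add: feasible_def vload_def)
next
  case (Suc k)
  then show ?case
    using rt_delta_feasible(2)[OF cgraph Suc active_subset_E]
    by (cases "active k = {}") (simp_all add: state_Suc_idle mu_Suc)
qed

lemma deactivated_saturated:
  assumes "e \<in> active k" "e \<notin> active (Suc k)"
  shows "(\<exists>i\<in>e. vsat E cV (mu (Suc k)) i) \<or> esat cE (mu (Suc k)) e"
  using assms active_Suc[of k] by auto

lemma active_Suc_psubset: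
  assumes "active k \<noteq> {}"
  shows "active (Suc k) \<subset> active k"
proof -
  obtain e where "e \<in> active k" "(\<exists>i\<in>e. vsat E cV (mu (Suc k)) i) \<or> esat cE (mu (Suc k)) e"
    using rt_delta_saturates[OF cgraph feasible_mu[of k] active_subset_E assms]
    unfolding mu_Suc[OF assms] by blast
  then show ?thesis using active_Suc[OF assms] by auto
qed

lemma card_active_le: "active k \<noteq> {} \<Longrightarrow> card (active k) + k \<le> card E"
proof (induction k)
  case 0
  then show ?case using card_mono[OF finite_E active_subset_E[of 0]] by simp
next
  case (Suc k)
  then have "active k \<noteq> {}" using active_Suc_subset by blast
  moreover have "finite (active k)" using finite_subset[OF active_subset_E finite_E] .
  ultimately have "card (active (Suc k)) < card (active k)"
    using active_Suc_psubset psubset_card_mono by blast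
  with Suc.IH \<open>active k \<noteq> {}\<close> show ?case by simp
qed

lemma ex_active_empty: "\<exists>k. active k = {}"
  using card_active_le[of "Suc (card E)"] by auto

definition rounds :: nat where
  "rounds = (LEAST k. active k = {})"

lemma active_rounds: "active rounds = {}"
  unfolding rounds_def using LeastI_ex[OF ex_active_empty] .

lemma Suc_le_rounds: "active k \<noteq> {} \<Longrightarrow> Suc k \<le> rounds"
  using active_antimono[of rounds k] active_rounds by (cases "Suc k \<le> rounds") auto

lemma rising_tide_eq_mu_Suc:
  assumes "active k \<noteq> {}" "e \<notin> active (Suc k)"
  shows "rising_tide V E cV cE e = mu (Suc k) e"
  unfolding rising_tide_def rounds_def[symmetric]
  using mu_inactive[OF assms(2) Suc_le_rounds[OF assms(1)]] .

lemma vsat_not_active: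
  assumes "vsat E cV (mu (Suc k)) i" "Suc k \<le> m" "e \<in> active m"
  shows "i \<notin> e"
proof -
  have "e \<in> active (Suc k)" using assms(2,3) active_antimono by blast
  then show ?thesis
    using assms(1) by (cases "active k = {}") (auto simp: state_Suc_idle active_Suc)
qed

lemma active_level: "e \<in> active k \<Longrightarrow> e' \<in> active k \<Longrightarrow> mu k e = mu k e'"
proof (induction k arbitrary: e e')
  case (Suc k)
  then have "e \<in> active k" "e' \<in> active k" using active_Suc_subset by auto
  moreover from this have "active k \<noteq> {}" "mu k e = mu k e'" using Suc.IH by blast+
  ultimately show ?case by (simp add: mu_Suc raise_def)
qed simp

lemma active_level_Suc:
  assumes "e \<in> active k" "e' \<in> active k"
  shows "mu (Suc k) e = mu (Suc k) e'"
proof -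
  have "active k \<noteq> {}" using assms(1) by blast
  then show ?thesis using active_level[OF assms] assms by (simp add: mu_Suc raise_def)
qed

lemma owns_dep_graph_iff:
  "owns (dep_graph V E cV cE) i e \<longleftrightarrow>
    (\<exists>k. e \<in> E \<and> i \<in> e \<and> e \<in> active k \<and> e \<notin> active (Suc k) \<and> vsat E cV (mu (Suc k)) i)"
proof
  assume "\<exists>k. e \<in> E \<and> i \<in> e \<and> e \<in> active k \<and> e \<notin> active (Suc k) \<and> vsat E cV (mu (Suc k)) i"
  moreover from this obtain j where "e = {i, j}" using cgraph_edge_pair[OF cgraph] by blast
  ultimately show "owns (dep_graph V E cV cE) i e" unfolding owns_def dep_graph_def by blast
qed (auto simp: owns_def dep_graph_def)

lemma rising_tide_owned_eq:
  assumes "owns (dep_graph V E cV cE) i e" "owns (dep_graph V E cV cE) i e'"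
  shows "rising_tide V E cV cE e = rising_tide V E cV cE e'"
proof -
  obtain k where k: "i \<in> e" "e \<in> active k" "e \<notin> active (Suc k)" "vsat E cV (mu (Suc k)) i"
    using assms(1) owns_dep_graph_iff by blast
  obtain k' where k': "i \<in> e'" "e' \<in> active k'" "e' \<notin> active (Suc k')" "vsat E cV (mu (Suc k')) i"
    using assms(2) owns_dep_graph_iff by blast
  have "\<not> Suc k \<le> k'" using vsat_not_active[OF k(4) _ k'(2)] k'(1) by blast
  moreover have "\<not> Suc k' \<le> k" using vsat_not_active[OF k'(4) _ k(2)] k(1) by blast
  ultimately have "k' = k" by simp
  with k' have "e' \<in> active k" "e' \<notin> active (Suc k)" by simp_all
  moreover have "active k \<noteq> {}" using k(2) by blast
  ultimately show ?thesis
    using active_level_Suc[OF k(2)] rising_tide_eq_mu_Suc k(3) by simp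
qed

lemma rising_tide_owner_saturated:
  assumes "owns (dep_graph V E cV cE) i e"
  shows "vsat E cV (rising_tide V E cV cE) i"
proof -
  obtain k where k: "e \<in> active k" "vsat E cV (mu (Suc k)) i"
    using assms owns_dep_graph_iff by blast
  have "rising_tide V E cV cE e' = mu (Suc k) e'" if "i \<in> e'" for e'
    using k vsat_not_active[OF k(2) order.refl] that by (intro rising_tide_eq_mu_Suc) auto
  then have "vload E (rising_tide V E cV cE) i = vload E (mu (Suc k)) i"
    unfolding vload_def by (intro sum.cong) auto
  with k(2) show ?thesis unfolding vsat_def by simp
qed

lemma rising_tide_unowned_saturated:
  assumes "e \<in> E" "\<forall>i. \<not> owns (dep_graph V E cV cE) i e"
  shows "esat cE (rising_tide V E cV cE) e"
proof (cases "e \<in> active 0")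
  case False
  then have "cE e = 0" using assms(1) cE_nonneg by force
  moreover have "rising_tide V E cV cE e = mu 0 e"
    unfolding rising_tide_def rounds_def[symmetric] using mu_inactive[OF False] by simp
  ultimately show ?thesis unfolding esat_def by simp
next
  case True
  have "\<exists>k. e \<in> active k \<and> e \<notin> active (Suc k)"
  proof (rule ccontr)
    assume "\<not> ?thesis"
    then have "e \<in> active k" for k using True by (induction k) auto
    then show False using active_rounds by blast
  qed
  then obtain k where k: "e \<in> active k" "e \<notin> active (Suc k)" by blast
  then have "\<not> vsat E cV (mu (Suc k)) i" if "i \<in> e" for i
    using assms owns_dep_graph_iff that by blast
  then have "esat cE (mu (Suc k)) e" using deactivated_saturated[OF k] by blast
  then show ?thesis using rising_tide_eq_mu_Suc[OF _ k(2)] k(1) unfolding esat_def by auto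
qed

end

lemma abs_sum_balanced_le:
  fixes x :: "'a \<Rightarrow> real"
  assumes "finite A" "finite B" "A \<inter> B = {}"
    and const: "\<And>e e'. e \<in> A \<Longrightarrow> e' \<in> A \<Longrightarrow> x e = x e'"
    and balanced: "A \<noteq> {} \<Longrightarrow> sum x (A \<union> B) = 0"
  shows "\<bar>sum x (A \<union> B)\<bar> + (\<Sum>e\<in>A. \<bar>x e\<bar>) \<le> (\<Sum>e\<in>B. \<bar>x e\<bar>)"
proof (cases "A = {}")
  case False
  then obtain e0 where "e0 \<in> A" by blast
  have "(\<Sum>e\<in>A. \<bar>x e\<bar>) = (\<Sum>e\<in>A. \<bar>x e0\<bar>)"
    by (rule sum.cong[OF refl], rule arg_cong[where f = abs], erule const[OF _ \<open>e0 \<in> A\<close>])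
  moreover have "sum x A = (\<Sum>e\<in>A. x e0)"
    by (rule sum.cong[OF refl], erule const[OF _ \<open>e0 \<in> A\<close>])
  ultimately have "(\<Sum>e\<in>A. \<bar>x e\<bar>) = \<bar>sum x A\<bar>"
    by (simp add: abs_mult)
  also have "sum x A = - sum x B"
    using balanced[OF False] sum.union_disjoint[OF assms(1-3), of x] by simp
  finally show ?thesis using balanced[OF False] by simp
qed simp

lemma card_filter_not_le:
  assumes "finite A" "card A \<le> 2"
  shows "card {a\<in>A. \<not> P a} \<le> card {a\<in>A. P a} + (if \<exists>a\<in>A. P a then 0 else 2)"
proof -
  have "card {a\<in>A. \<not> P a} + card {a\<in>A. P a} = card A"
    using assms(1) by (subst card_Un_disjoint[symmetric]) (auto intro: arg_cong[where f = card])
  moreover have "(\<exists>a\<in>A. P a) \<Longrightarrow> 0 < card {a\<in>A. P a}"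
    using assms(1) by (auto simp: card_gt_0_iff)
  ultimately show ?thesis using assms(2) by (cases "\<exists>a\<in>A. P a") simp_all
qed

lemma sum_abs_incident_le_unowned:
  fixes x :: "'v set \<Rightarrow> real" and own :: "'v \<Rightarrow> 'v set \<Rightarrow> bool"
  assumes cgraph: "cgraph V E"
    and own_incident: "\<And>i e. own i e \<Longrightarrow> e \<in> E \<and> i \<in> e"
    and own_const: "\<And>i e e'. own i e \<Longrightarrow> own i e' \<Longrightarrow> x e = x e'"
    and own_balanced: "\<And>i e. own i e \<Longrightarrow> (\<Sum>e\<in>{e\<in>E. i \<in> e}. x e) = 0"
  shows "(\<Sum>i\<in>V. \<bar>\<Sum>e\<in>{e\<in>E. i \<in> e}. x e\<bar>) \<le> 2 * (\<Sum>e\<in>{e\<in>E. \<forall>i. \<not> own i e}. \<bar>x e\<bar>)"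
proof -
  have fV: "finite V" and fE: "finite E"
    using cgraph cgraph_finite_edges unfolding cgraph_def by auto
  have vertex: "\<bar>\<Sum>e\<in>{e\<in>E. i \<in> e}. x e\<bar> + (\<Sum>e\<in>{e\<in>E. own i e}. \<bar>x e\<bar>)
      \<le> (\<Sum>e\<in>{e\<in>E. i \<in> e \<and> \<not> own i e}. \<bar>x e\<bar>)" for i
  proof -
    have split: "{e\<in>E. i \<in> e} = {e\<in>E. own i e} \<union> {e\<in>E. i \<in> e \<and> \<not> own i e}"
      using own_incident by blast
    have "\<bar>sum x ({e\<in>E. own i e} \<union> {e\<in>E. i \<in> e \<and> \<not> own i e})\<bar>
        + (\<Sum>e\<in>{e\<in>E. own i e}. \<bar>x e\<bar>) \<le> (\<Sum>e\<in>{e\<in>E. i \<in> e \<and> \<not> own i e}. \<bar>x e\<bar>)"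
      using fE own_const own_balanced by (intro abs_sum_balanced_le) (auto simp: split[symmetric])
    then show ?thesis by (simp only: split[symmetric])
  qed
  have edge: "\<bar>x e\<bar> * card {i\<in>V. i \<in> e \<and> \<not> own i e}
      \<le> \<bar>x e\<bar> * card {i\<in>V. own i e} + (if \<forall>i. \<not> own i e then 2 * \<bar>x e\<bar> else 0)"
    if "e \<in> E" for e
  proof -
    have "e \<subseteq> V" "card e \<le> 2" using cgraph that unfolding cgraph_def by auto
    then have "finite e" using fV finite_subset by blast
    have "{i\<in>V. i \<in> e \<and> \<not> own i e} = {i\<in>e. \<not> own i e}" "{i\<in>V. own i e} = {i\<in>e. own i e}"
      using \<open>e \<subseteq> V\<close> own_incident by blast+
    then have card_le: "real (card {i\<in>V. i \<in> e \<and> \<not> own i e})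
        \<le> real (card {i\<in>V. own i e}) + (if \<forall>i. \<not> own i e then 2 else 0)"
      using card_filter_not_le[OF \<open>finite e\<close> \<open>card e \<le> 2\<close>, of "\<lambda>i. own i e"] own_incident
      by (auto split: if_splits)
    show ?thesis
      using mult_left_mono[OF card_le abs_ge_zero[of "x e"]]
      by (cases "\<forall>i. \<not> own i e") (auto simp: distrib_left)
  qed
  have "(\<Sum>i\<in>V. \<bar>\<Sum>e\<in>{e\<in>E. i \<in> e}. x e\<bar>) + (\<Sum>e\<in>E. \<bar>x e\<bar> * card {i\<in>V. own i e})
      \<le> (\<Sum>e\<in>E. \<bar>x e\<bar> * card {i\<in>V. i \<in> e \<and> \<not> own i e})"
    using sum_mono[of V, OF vertex] fV fE
    by (simp add: sum.distrib sum.swap_restrict[of V E] mult.commute)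
  also have "\<dots> \<le> (\<Sum>e\<in>E. \<bar>x e\<bar> * card {i\<in>V. own i e}
      + (if \<forall>i. \<not> own i e then 2 * \<bar>x e\<bar> else 0))"
    by (rule sum_mono) (rule edge)
  also have "\<dots> = (\<Sum>e\<in>E. \<bar>x e\<bar> * card {i\<in>V. own i e})
      + 2 * (\<Sum>e\<in>{e\<in>E. \<forall>i. \<not> own i e}. \<bar>x e\<bar>)"
    by (simp add: sum.distrib sum.inter_filter[OF fE, symmetric] sum_distrib_left)
  finally show ?thesis by simp
qed

theorem lemma24:
  fixes V :: "'v set" and E :: "'v set set" and cV :: "'v \<Rightarrow> real"
    and cEG cEH :: "'v set \<Rightarrow> real" and s t :: 'v
  assumes "cgraph V E"
    and "\<forall>i\<in>V. 0 \<le> cV i"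
    and "\<forall>e\<in>E. 0 \<le> cEG e" and "\<forall>e\<in>E. 0 \<le> cEH e"
    and "{s, t} \<in> E"
    and "\<forall>e\<in>E. e \<noteq> {s, t} \<longrightarrow> cEG e = cEH e"
    and "no_simult_sat V E cV cEG" and "no_simult_sat V E cV cEH"
    and "dep_graph V E cV cEG = dep_graph V E cV cEH"
  shows "(\<Sum>i\<in>V. \<bar>(cV i - vload E (rising_tide V E cV cEG) i)
                   - (cV i - vload E (rising_tide V E cV cEH) i)\<bar>)
         \<le> 2 * \<bar>cEG {s, t} - cEH {s, t}\<bar>"
proof -
  interpret G: capacitated_graph V E cV cEG using assms(1-3) by unfold_locales
  interpret H: capacitated_graph V E cV cEH using assms(1,2,4) by unfold_locales
  define D where "D = dep_graph V E cV cEG"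
  define x where "x e = rising_tide V E cV cEH e - rising_tide V E cV cEG e" for e
  have "(\<Sum>i\<in>V. \<bar>(cV i - vload E (rising_tide V E cV cEG) i)
                   - (cV i - vload E (rising_tide V E cV cEH) i)\<bar>)
      = (\<Sum>i\<in>V. \<bar>\<Sum>e\<in>{e\<in>E. i \<in> e}. x e\<bar>)"
    by (simp add: x_def vload_def sum_subtractf)
  also have "\<dots> \<le> 2 * (\<Sum>e\<in>{e\<in>E. \<forall>i. \<not> owns D i e}. \<bar>x e\<bar>)"
  proof (rule sum_abs_incident_le_unowned[OF assms(1)])
    show "owns D i e \<Longrightarrow> e \<in> E \<and> i \<in> e" for i e
      unfolding D_def G.owns_dep_graph_iff by blast
    show "owns D i e \<Longrightarrow> owns D i e' \<Longrightarrow> x e = x e'" for i e e'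
      using G.rising_tide_owned_eq H.rising_tide_owned_eq unfolding x_def D_def assms(9) by metis
    show "owns D i e \<Longrightarrow> (\<Sum>e\<in>{e\<in>E. i \<in> e}. x e) = 0" for i e
      using G.rising_tide_owner_saturated H.rising_tide_owner_saturated
      unfolding x_def D_def assms(9) vsat_def vload_def by (fastforce simp: sum_subtractf)
  qed
  also have "\<dots> = 2 * (\<Sum>e\<in>{e\<in>E. \<forall>i. \<not> owns D i e}. \<bar>cEG e - cEH e\<bar>)"
    using G.rising_tide_unowned_saturated H.rising_tide_unowned_saturated
    unfolding x_def D_def assms(9) esat_def by (auto intro!: sum.cong)
  also have "\<dots> \<le> 2 * (\<Sum>e\<in>E. \<bar>cEG e - cEH e\<bar>)"
    using cgraph_finite_edges[OF assms(1)] by (simp add: sum_mono2)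
  also have "(\<Sum>e\<in>E. \<bar>cEG e - cEH e\<bar>) = \<bar>cEG {s, t} - cEH {s, t}\<bar>"
    using cgraph_finite_edges[OF assms(1)] assms(5,6) by (simp add: sum.remove sum.neutral)
  finally show ?thesis .
qed

end
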